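(* Assume the setting below with $k\ge2$, and suppose $\mathcal{S}$ is pseudo-symmetric. Let $(x_1,y_1)\in L$ be the point with $\varphi(x_1,y_1)=g(\mathcal{S})/2+a$. Then (a) either $y_1=0$ or $(x_1,y_1+1)\notin L$; (b) either $x_1<k$ or $(x_1+k,y_1)\notin L$; (c) either $x_1=0$, or $(x_1+1,y_1)\notin L$, or $x_1\equiv1\pmod k$.
   Context: Setting (AA-semigroups). Let $a,d,k,c$ be positive integers with $\gcd(a,a+d,\ldots,a+kd,c)=1$ and $\gcd(a,d)=1$, and let $\mathcal{S}=\langle a,a+d,\ldots,a+kd,c\rangle$ be the numerical semigroup of non-negative integer combinations of these generators; $g(\mathcal{S})$ is its Frobenius number (largest integer not in $\mathcal{S}$). $\mathcal{S}$ is pseudo-symmetric if $g(\mathcal{S})$ is even and $\mathcal{S}\cup(g(\mathcal{S})-\mathcal{S})=\mathbb{Z}\setminus\{g(\mathcal{S})/2\}$. Put $s_{-1}=a$ and let $s_0$ be the unique integer with $ds_0\equiv c\pmod a$, $0\le s_0<a$. If $s_0=0$ set $m=-1$. Otherwise define $q_{i+1},s_{i+1}$ for $i=0,1,2,\ldots$ by $s_{i-1}=q_{i+1}s_i-s_{i+1}$ with $0\le s_{i+1}<s_i$, and let $m$ be the index with $s_m>0=s_{m+1}$ (so $s_m=\gcd(a,c)$). Define $P_{-1}=0$, $P_0=1$, $P_{i+1}=q_{i+1}P_i-P_{i-1}$ for $i=0,\ldots,m$, and $R_i=\frac1a\big((a+kd)s_i-kcP_i\big)$ for $-1\le i\le m+1$;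 these are integers with $-c/s_m=R_{m+1}<R_m<\cdots<R_0<R_{-1}=a+kd$. Let $v$ be the unique integer with $R_{v+1}\le0<R_v$. Let $L=A\cup B$, where $A=\{(x,y)\in\mathbb{Z}^2:0\le x\le s_v-1,\ 0\le y\le P_{v+1}-P_v-1\}$ and $B=\{(x,y)\in\mathbb{Z}^2:0\le x\le s_v-s_{v+1}-1,\ P_{v+1}-P_v\le y\le P_{v+1}-1\}$. Define $\varphi:\mathbb{Z}^2\to\mathbb{Z}$, $\varphi(x,y)=\lceil x/k\rceil a+xd+yc$. It is known (Rødseth) that $|L|=a$ and $\varphi$ maps $L$ bijectively onto $\mathrm{Ap}(\mathcal{S};a)=\{s\in\mathcal{S}:s-a\notin\mathcal{S}\}$; consequently $g(\mathcal{S})+a=\max\varphi(L)$ is attained at $(s_v-s_{v+1}-1,P_{v+1}-1)$ or at $(s_v-1,P_{v+1}-P_v-1)$. *)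

theory Defs
  imports Complex_Main "HOL-Number_Theory.Cong"
begin

definition gen_sg :: "int set \<Rightarrow> int set" where
  "gen_sg G = {n. \<exists>f::int \<Rightarrow> int. (\<forall>g. f g \<ge> 0) \<and> n = (\<Sum>g\<in>G. f g * g)}"

definition AA_gens :: "int \<Rightarrow> int \<Rightarrow> int \<Rightarrow> int \<Rightarrow> int set" where
  "AA_gens a d k c = {a + i * d | i. 0 \<le> i \<and> i \<le> k} \<union> {c}"

definition frob :: "int set \<Rightarrow> int" where
  "frob S = (GREATEST n. n \<notin> S)"

definition pseudo_symmetric :: "int set \<Rightarrow> bool" where
  "pseudo_symmetric S \<longleftrightarrow> even (frob S) \<and>
     S \<union> {frob S - s | s. s \<in> S} = UNIV - {frob S div 2}"

text \<open>State after n steps: (s_{n-1}, s_n, P_{n-1}, P_n), starting from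
  (s_{-1}, s_0, P_{-1}, P_0) = (a, s0, 0, 1).  Step: q = ceiling(s_{i-1}/s_i),
  s_{i+1} = q s_i - s_{i-1}, P_{i+1} = q P_i - P_{i-1} (only meaningful while s_i > 0).\<close>
fun cf_state :: "int \<Rightarrow> int \<Rightarrow> nat \<Rightarrow> int \<times> int \<times> int \<times> int" where
  "cf_state a s0 0 = (a, s0, 0, 1)"
| "cf_state a s0 (Suc n) = (case cf_state a s0 n of (u, v, p, r) \<Rightarrow>
     (let q = (if v = 0 then 0 else \<lceil>of_int u / of_int v :: real\<rceil>)
      in (v, q * v - u, r, q * r - p)))"

definition sseq :: "int \<Rightarrow> int \<Rightarrow> int \<Rightarrow> int" where
  "sseq a s0 i = fst (cf_state a s0 (nat (i + 1)))"

definition Pseq :: "int \<Rightarrow> int \<Rightarrow> int \<Rightarrow> int" where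
  "Pseq a s0 i = fst (snd (snd (cf_state a s0 (nat (i + 1)))))"

definition Rseq :: "int \<Rightarrow> int \<Rightarrow> int \<Rightarrow> int \<Rightarrow> int \<Rightarrow> int \<Rightarrow> real" where
  "Rseq a d k c s0 i = real_of_int ((a + k * d) * sseq a s0 i - k * c * Pseq a s0 i) / real_of_int a"

definition Lset :: "int \<Rightarrow> int \<Rightarrow> int \<Rightarrow> (int \<times> int) set" where
  "Lset a s0 v =
     {(x, y). 0 \<le> x \<and> x \<le> sseq a s0 v - 1 \<and> 0 \<le> y \<and> y \<le> Pseq a s0 (v+1) - Pseq a s0 v - 1}
   \<union> {(x, y). 0 \<le> x \<and> x \<le> sseq a s0 v - sseq a s0 (v+1) - 1 \<and>
        Pseq a s0 (v+1) - Pseq a s0 v \<le> y \<and> y \<le> Pseq a s0 (v+1) - 1}"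

definition phi :: "int \<Rightarrow> int \<Rightarrow> int \<Rightarrow> int \<Rightarrow> int \<times> int \<Rightarrow> int" where
  "phi a d k c p = (case p of (x, y) \<Rightarrow>
      \<lceil>of_int x / of_int k :: real\<rceil> * a + x * d + y * c)"

end

theory Submission
  imports Defs
begin

text \<open>Every lattice point \<open>(x, y)\<close> with \<open>x, y \<ge> 0\<close> can be moved into \<open>L\<close> along the kernel vectors
  \<open>(s\<^sub>v, -P\<^sub>v)\<close> and \<open>(s\<^sub>v\<^sub>+\<^sub>1, -P\<^sub>v\<^sub>+\<^sub>1)\<close> of \<open>(x, y) \<mapsto> x d + y c mod a\<close> without increasing \<open>\<phi>\<close>;
  the signs of \<open>R\<^sub>v\<close> and \<open>R\<^sub>v\<^sub>+\<^sub>1\<close> make this terminate. Since \<open>|L| = a\<close>, \<open>\<phi>\<close> then hits every residue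
  class mod \<open>a\<close> exactly once on \<open>L\<close>, and \<open>\<phi>(q) - a \<notin> S\<close> for \<open>q \<in> L\<close>.
  For pseudo-symmetric \<open>S\<close> and \<open>h = g(S)/2\<close>, every nonzero \<open>t \<in> S\<close> has \<open>h + t \<in> S\<close>: otherwise
  \<open>h + t = g(S) - s\<close> with \<open>s \<in> S\<close>, so \<open>h = s + t \<in> S\<close>. Hence no neighbour \<open>q \<in> L\<close> of \<open>(x\<^sub>1, y\<^sub>1)\<close> has
  \<open>\<phi>(q) = \<phi>(x\<^sub>1, y\<^sub>1) + t\<close> with \<open>t \<in> {c, a + k d, a + d}\<close>. If \<open>x\<^sub>1 \<not>\<equiv> 0, 1 (mod k)\<close>, the two
  horizontal neighbours change \<open>\<phi>\<close> by \<open>\<plusminus>d\<close>, and \<open>h \<plusminus> d \<notin> S\<close> contradicts pseudo-symmetry.\<close>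

definition ceil_div :: "int \<Rightarrow> int \<Rightarrow> int" where
  "ceil_div x k = \<lceil>real_of_int x / real_of_int k\<rceil>"

lemma ceil_div_le_iff: "0 < k \<Longrightarrow> ceil_div x k \<le> t \<longleftrightarrow> x \<le> k * t"
  unfolding ceil_div_def ceiling_le_iff
  by (simp add: pos_divide_le_eq mult.commute flip: of_int_mult)

lemma le_ceil_div_iff: "0 < k \<Longrightarrow> t \<le> ceil_div x k \<longleftrightarrow> k * t - k < x"
proof -
  assume k: "0 < k"
  have "t \<le> ceil_div x k \<longleftrightarrow> (real_of_int t - 1) * real_of_int k < real_of_int x"
    using k by (simp add: ceil_div_def le_ceiling_iff pos_less_divide_eq)
  also have "\<dots> \<longleftrightarrow> real_of_int (k * t - k) < real_of_int x"
    by (simp add: algebra_simps)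
  finally show ?thesis
    by (simp only: of_int_less_iff)
qed

lemma ceil_div_eqI: "0 < k \<Longrightarrow> k * t - k < x \<Longrightarrow> x \<le> k * t \<Longrightarrow> ceil_div x k = t"
  by (meson antisym ceil_div_le_iff le_ceil_div_iff)

lemma ceil_div_bounds:
  assumes "0 < k" shows "x \<le> k * ceil_div x k" "k * ceil_div x k - k < x"
  using ceil_div_le_iff[OF assms] le_ceil_div_iff[OF assms] by blast+

lemma ceil_div_mono: "0 < k \<Longrightarrow> x \<le> x' \<Longrightarrow> ceil_div x k \<le> ceil_div x' k"
  using ceil_div_bounds ceil_div_le_iff by (meson order_trans)

lemma ceil_div_add_le: "0 < k \<Longrightarrow> ceil_div (x + x') k \<le> ceil_div x k + ceil_div x' k"
  using ceil_div_bounds[of k x] ceil_div_bounds[of k x'] by (simp add: ceil_div_le_iff distrib_left)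

lemma ceil_div_diff_le: "0 < k \<Longrightarrow> ceil_div (x - x') k \<le> ceil_div x k - x' div k"
proof -
  assume k: "0 < k"
  have "k * (x' div k) \<le> x'"
    using mult_div_mod_eq[of k x'] pos_mod_sign[OF k, of x'] by linarith
  then show ?thesis
    using k ceil_div_bounds(1)[OF k, of x] by (simp add: ceil_div_le_iff right_diff_distrib)
qed

lemma ceil_div_add_self: "0 < k \<Longrightarrow> ceil_div (x + k) k = ceil_div x k + 1"
  using ceil_div_bounds[of k x] by (intro ceil_div_eqI) (auto simp: algebra_simps)

lemma ceil_div_succ: "0 < k \<Longrightarrow> \<not> k dvd x \<Longrightarrow> ceil_div (x + 1) k = ceil_div x k"
proof -
  assume k: "0 < k" and x: "\<not> k dvd x"
  have "x \<noteq> k * ceil_div x k"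
    using x by (metis dvd_triv_left)
  then show ?thesis
    using k ceil_div_bounds[of k x] by (intro ceil_div_eqI) auto
qed

lemma ceil_div_pred: "1 < k \<Longrightarrow> x mod k \<noteq> 1 \<Longrightarrow> ceil_div (x - 1) k = ceil_div x k"
proof -
  assume k: "1 < k" and x: "x mod k \<noteq> 1"
  have "(k * n + 1) mod k = 1" for n
    using k by simp
  then have "x \<noteq> k * (ceil_div x k - 1) + 1"
    using x by metis
  then show ?thesis
    using k ceil_div_bounds[of k x] by (intro ceil_div_eqI) (auto simp: algebra_simps)
qed

lemma ceil_div_dvd: "0 < k \<Longrightarrow> k dvd x \<Longrightarrow> ceil_div x k = x div k"
  by (intro ceil_div_eqI) auto

lemma phi_eq: "phi a d k c (x, y) = ceil_div x k * a + x * d + y * c"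
  by (simp add: phi_def ceil_div_def)

lemma phi_add_y: "phi a d k c (x, y + 1) = phi a d k c (x, y) + c"
  by (simp add: phi_eq algebra_simps)

lemma phi_add_k: "0 < k \<Longrightarrow> phi a d k c (x + k, y) = phi a d k c (x, y) + (a + k * d)"
  using ceil_div_add_self[of k x] by (simp add: phi_eq algebra_simps)

lemma phi_succ_dvd: "0 < k \<Longrightarrow> k dvd x \<Longrightarrow> phi a d k c (x + 1, y) = phi a d k c (x, y) + (a + d)"
proof -
  assume k: "0 < k" and x: "k dvd x"
  have "ceil_div (x + 1) k = x div k + 1"
    using k x by (intro ceil_div_eqI) (auto simp: algebra_simps)
  then have "ceil_div (x + 1) k = ceil_div x k + 1"
    using k x by (simp add: ceil_div_dvd)
  then show ?thesis
    by (simp add: phi_eq distrib_right)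
qed

lemma phi_succ: "0 < k \<Longrightarrow> \<not> k dvd x \<Longrightarrow> phi a d k c (x + 1, y) = phi a d k c (x, y) + d"
  using ceil_div_succ[of k x] by (simp add: phi_eq algebra_simps)

lemma phi_pred: "1 < k \<Longrightarrow> x mod k \<noteq> 1 \<Longrightarrow> phi a d k c (x - 1, y) = phi a d k c (x, y) - d"
  using ceil_div_pred[of k x] by (simp add: phi_eq algebra_simps)

lemma phi_cong_linear: "[phi a d k c (x, y) = x * d + y * c] (mod a)"
  by (simp add: phi_eq cong_iff_dvd_diff)

lemma gen_sg_add: "n \<in> gen_sg G \<Longrightarrow> n' \<in> gen_sg G \<Longrightarrow> n + n' \<in> gen_sg G"
  unfolding gen_sg_def mem_Collect_eq
proof (elim exE conjE)
  fix f f' :: "int \<Rightarrow> int"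
  assume "\<forall>g. 0 \<le> f g" "n = (\<Sum>g\<in>G. f g * g)" "\<forall>g. 0 \<le> f' g" "n' = (\<Sum>g\<in>G. f' g * g)"
  then show "\<exists>h. (\<forall>g. 0 \<le> h g) \<and> n + n' = (\<Sum>g\<in>G. h g * g)"
    by (intro exI[of _ "\<lambda>g. f g + f' g"]) (simp add: sum.distrib distrib_right)
qed

lemma gen_sg_generator:
  assumes "finite G" "g \<in> G"
  shows "g \<in> gen_sg G"
proof -
  have "(\<Sum>h\<in>G. (if h = g then 1 else 0) * h) = (\<Sum>h\<in>G. if h = g then h else 0)"
    by (rule sum.cong) auto
  also have "\<dots> = g"
    using assms by simp
  finally show ?thesis
    unfolding gen_sg_def by (intro CollectI exI[of _ "\<lambda>h. if h = g then 1 else 0"]) simp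
qed

lemma finite_AA_gens: "finite (AA_gens a d k c)"
proof -
  have "AA_gens a d k c = (\<lambda>i. a + i * d) ` {0..k} \<union> {c}"
    by (auto simp: AA_gens_def)
  then show ?thesis
    by simp
qed

lemma AA_gens_memberI: "c \<in> AA_gens a d k c" "0 \<le> i \<Longrightarrow> i \<le> k \<Longrightarrow> a + i * d \<in> AA_gens a d k c"
  by (auto simp: AA_gens_def)

text \<open>The elements of the AA-semigroup have the form \<open>t a + x d + y c\<close> with \<open>0 \<le> x \<le> k t\<close>:
  \<open>t\<close> counts the generators \<open>a + i d\<close> used, and each contributes at most \<open>k\<close> copies of \<open>d\<close>.\<close>
definition AA_repr :: "int \<Rightarrow> int \<Rightarrow> int \<Rightarrow> int \<Rightarrow> int set" where
  "AA_repr a d k c = {t * a + x * d + y * c | t x y. 0 \<le> x \<and> x \<le> k * t \<and> 0 \<le> y}"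

lemma AA_repr_add: "n \<in> AA_repr a d k c \<Longrightarrow> n' \<in> AA_repr a d k c \<Longrightarrow> n + n' \<in> AA_repr a d k c"
  unfolding AA_repr_def mem_Collect_eq
proof (elim exE conjE)
  fix t x y t' x' y'
  assume "n = t * a + x * d + y * c" "0 \<le> x" "x \<le> k * t" "0 \<le> y"
    "n' = t' * a + x' * d + y' * c" "0 \<le> x'" "x' \<le> k * t'" "0 \<le> y'"
  then show "\<exists>t x y. n + n' = t * a + x * d + y * c \<and> 0 \<le> x \<and> x \<le> k * t \<and> 0 \<le> y"
    by (intro exI[of _ "t + t'"] exI[of _ "x + x'"] exI[of _ "y + y'"]) (simp add: algebra_simps)
qed

lemma AA_repr_mult_gen:
  assumes "0 < k" "g \<in> AA_gens a d k c" "0 \<le> z"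
  shows "z * g \<in> AA_repr a d k c"
proof (cases rule: UnE[OF assms(2)[unfolded AA_gens_def]])
  case 1
  then obtain i where i: "0 \<le> i" "i \<le> k" "g = a + i * d"
    by blast
  have "i * z \<le> k * z"
    using i assms(3) by (simp add: mult_right_mono)
  then show ?thesis
    unfolding AA_repr_def using i assms(3)
    by (intro CollectI exI[of _ z] exI[of _ "z * i"] exI[of _ 0]) (simp add: algebra_simps)
next
  case 2
  then show ?thesis
    unfolding AA_repr_def using assms(3)
    by (intro CollectI exI[of _ 0] exI[of _ 0] exI[of _ z]) simp
qed

lemma gen_sg_AA_gens_subset: "0 < k \<Longrightarrow> gen_sg (AA_gens a d k c) \<subseteq> AA_repr a d k c"
proof
  fix n
  assume k: "0 < k" and "n \<in> gen_sg (AA_gens a d k c)"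
  then obtain f where f: "\<forall>g. 0 \<le> f g" "n = (\<Sum>g\<in>AA_gens a d k c. f g * g)"
    by (auto simp: gen_sg_def)
  have "(\<Sum>g\<in>G. f g * g) \<in> AA_repr a d k c" if "finite G" "G \<subseteq> AA_gens a d k c" for G
    using that
  proof (induction G rule: finite_induct)
    case empty
    show ?case
      unfolding AA_repr_def by (intro CollectI exI[of _ 0] conjI) simp_all
  next
    case (insert g G)
    have "f g * g \<in> AA_repr a d k c"
      using insert.prems f(1) by (intro AA_repr_mult_gen[OF k]) auto
    then show ?case
      using insert by (simp add: AA_repr_add)
  qed
  from this[OF finite_AA_gens order_refl] show "n \<in> AA_repr a d k c"
    using f(2) by simp
qed

lemma pseudo_symmetric_half_notin: "pseudo_symmetric S \<Longrightarrow> frob S div 2 \<notin> S"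
  unfolding pseudo_symmetric_def by blast

lemma pseudo_symmetric_half_plus_or_minus:
  assumes "pseudo_symmetric S" "z \<noteq> 0"
  shows "frob S div 2 + z \<in> S \<or> frob S div 2 - z \<in> S"
proof (rule disjCI)
  assume "frob S div 2 - z \<notin> S"
  moreover have "frob S div 2 - z \<in> S \<union> {frob S - s | s. s \<in> S}" "even (frob S)"
    using assms unfolding pseudo_symmetric_def by auto
  ultimately obtain s where "s \<in> S" "frob S div 2 - z = frob S - s"
    by blast
  moreover from \<open>even (frob S)\<close> have "frob S = 2 * (frob S div 2)"
    by simp
  ultimately have "s = frob S div 2 + z" "s \<in> S"
    by linarith+
  then show "frob S div 2 + z \<in> S"
    by simp
qed

lemma pseudo_symmetric_half_plus:
  assumes "pseudo_symmetric S" and add: "\<And>n n'. n \<in> S \<Longrightarrow> n' \<in> S \<Longrightarrow> n + n' \<in> S"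
    and "g \<in> S" "g \<noteq> 0"
  shows "frob S div 2 + g \<in> S"
  using pseudo_symmetric_half_plus_or_minus[OF assms(1,4)] pseudo_symmetric_half_notin[OF assms(1)]
    add[OF _ assms(3), of "frob S div 2 - g"] by auto

lemma cf_state_Suc:
  "cf_state a s0 n = (u, w, p, r) \<Longrightarrow>
   cf_state a s0 (Suc n) = (w, ceil_div u w * w - u, r, ceil_div u w * r - p)"
  by (simp add: ceil_div_def Let_def)

lemma cf_state_det: "cf_state a s0 n = (u, w, p, r) \<Longrightarrow> u * r - w * p = a"
proof (induction n arbitrary: u w p r)
  case (Suc n)
  obtain u' w' p' r' where st: "cf_state a s0 n = (u', w', p', r')"
    by (cases "cf_state a s0 n") auto
  define q where "q = ceil_div u' w'"
  have new: "u = w'" "w = q * w' - u'" "p = r'" "r = q * r' - p'"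
    using Suc.prems cf_state_Suc[OF st] by (simp_all add: q_def)
  show ?case
    using Suc.IH[OF st] unfolding new by (simp add: algebra_simps)
qed simp

lemma cf_state_cong:
  "[d * s0 = c] (mod a) \<Longrightarrow> cf_state a s0 n = (u, w, p, r) \<Longrightarrow>
   [u * d = p * c] (mod a) \<and> [w * d = r * c] (mod a)"
proof (induction n arbitrary: u w p r)
  case 0
  then show ?case
    by (auto simp: mult.commute cong_sym cong_mult_self_right)
next
  case (Suc n)
  obtain u' w' p' r' where st: "cf_state a s0 n = (u', w', p', r')"
    by (cases "cf_state a s0 n") auto
  define q where "q = ceil_div u' w'"
  have IH: "[u' * d = p' * c] (mod a)" "[w' * d = r' * c] (mod a)"
    using Suc.IH[OF Suc.prems(1) st] by auto
  have "[q * (w' * d) - u' * d = q * (r' * c) - p' * c] (mod a)"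
    using IH by (intro cong_diff cong_scalar_left)
  then have "[(q * w' - u') * d = (q * r' - p') * c] (mod a)"
    by (simp add: algebra_simps)
  with IH(2) Suc.prems(2) cf_state_Suc[OF st] show ?case
    by (simp add: q_def)
qed

text \<open>Once some \<open>s\<^sub>i\<close> vanishes, the recursion continues with \<open>q = 0\<close> and cycles through the
  last three sign patterns; only the first one describes genuine steps of the algorithm.\<close>
lemma cf_state_shape:
  assumes "0 \<le> s0" "s0 < a"
  shows "cf_state a s0 n = (u, w, p, r) \<Longrightarrow>
    (0 \<le> w \<and> w < u \<and> 0 \<le> p \<and> p < r) \<or>
    (u = 0 \<and> w < 0 \<and> r \<le> 0 \<and> 0 < p \<and> - r < p) \<or>
    (u < 0 \<and> w = 0 \<and> p \<le> 0 \<and> r < p) \<or>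
    (u = 0 \<and> 0 < w \<and> p < 0 \<and> 0 \<le> r \<and> r < - p)"
proof (induction n arbitrary: u w p r)
  case 0
  then show ?case
    using assms by auto
next
  case (Suc n)
  obtain u' w' p' r' where st: "cf_state a s0 n = (u', w', p', r')"
    by (cases "cf_state a s0 n") auto
  define q where "q = ceil_div u' w'"
  have new: "u = w'" "w = q * w' - u'" "p = r'" "r = q * r' - p'"
    using Suc.prems cf_state_Suc[OF st] by (simp_all add: q_def)
  consider (pos) "0 < w'" "w' < u'" "0 \<le> p'" "p' < r'"
    | "w' = 0" "0 < u'" "0 \<le> p'" "p' < r'"
    | "u' = 0" "w' < 0" "r' \<le> 0" "0 < p'" "- r' < p'"
    | "u' < 0" "w' = 0" "p' \<le> 0" "r' < p'"
    | "u' = 0" "0 < w'" "p' < 0" "0 \<le> r'" "r' < - p'"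
    using Suc.IH[OF st] by force
  then show ?case
  proof cases
    case pos
    have "u' \<le> q * w'" "q * w' - w' < u'" "2 \<le> q"
      using pos ceil_div_bounds[of w' u'] le_ceil_div_iff[of w' 2 u']
      by (simp_all add: q_def mult.commute)
    moreover have "2 * r' \<le> q * r'"
      using \<open>2 \<le> q\<close> pos by (intro mult_right_mono) auto
    ultimately have "0 \<le> w \<and> w < u \<and> 0 \<le> p \<and> p < r"
      using pos unfolding new by linarith
    then show ?thesis ..
  qed (simp_all add: new q_def ceil_div_def)
qed

lemma cf_state_sseq:
  "-1 \<le> i \<Longrightarrow>
   cf_state a s0 (nat (i + 1)) = (sseq a s0 i, sseq a s0 (i + 1), Pseq a s0 i, Pseq a s0 (i + 1))"
proof -
  assume "-1 \<le> i"
  then have "nat (i + 1 + 1) = Suc (nat (i + 1))"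
    by simp
  then show ?thesis
    by (cases "cf_state a s0 (nat (i + 1))") (simp add: sseq_def Pseq_def Let_def)
qed

definition staircase :: "int \<Rightarrow> int \<Rightarrow> int \<Rightarrow> int \<Rightarrow> (int \<times> int) set" where
  "staircase s s' P P' = {0..s - 1} \<times> {0..P' - P - 1} \<union> {0..s - s' - 1} \<times> {P' - P..P' - 1}"

lemma Lset_eq_staircase:
  "Lset a s0 v = staircase (sseq a s0 v) (sseq a s0 (v + 1)) (Pseq a s0 v) (Pseq a s0 (v + 1))"
  by (auto simp: Lset_def staircase_def)

lemma staircase_pred: "(x, y) \<in> staircase s s' P P' \<Longrightarrow> x \<noteq> 0 \<Longrightarrow> (x - 1, y) \<in> staircase s s' P P'"
  by (auto simp: staircase_def)

locale rodseth_staircase =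
  fixes a d k c s s' P P' :: int
  assumes pos: "0 < a" "0 < d" "0 < k" "0 < c"
    and coprime: "gcd a d = 1"
    and order: "0 \<le> s'" "s' < s" "0 \<le> P" "P < P'"
    and det: "s * P' - s' * P = a"
    and cong: "[s * d = P * c] (mod a)" "[s' * d = P' * c] (mod a)"
    and R_pos: "0 < (a + k * d) * s - k * c * P"
    and R_nonpos: "(a + k * d) * s' - k * c * P' \<le> 0"
begin

abbreviation "L \<equiv> staircase s s' P P'"
abbreviation "\<phi> \<equiv> phi a d k c"

lemma phi_cong_move:
  assumes "[i * d = j * c] (mod a)"
  shows "[\<phi> (x - i, y + j) = \<phi> (x, y)] (mod a)"
proof -
  have "[(x - i) * d + (y + j) * c = x * d + y * c - (i * d - j * c)] (mod a)"
    by (simp add: algebra_simps)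
  also have "[x * d + y * c - (i * d - j * c) = x * d + y * c - 0] (mod a)"
    using assms by (intro cong_diff cong_refl) (simp add: cong_iff_dvd_diff)
  finally show ?thesis
    using phi_cong_linear cong_sym cong_trans by (metis diff_zero)
qed

lemma phi_move_left: "s \<le> x \<Longrightarrow> \<phi> (x - s, y + P) \<le> \<phi> (x, y)"
proof -
  assume "s \<le> x"
  obtain t where t: "s * d - P * c = a * t"
    using cong(1) by (auto simp: cong_iff_dvd_diff elim!: dvdE)
  have "a * (s + k * t) = (a + k * d) * s - k * c * P"
    using t by algebra
  then have "0 < a * (s + k * t)"
    using R_pos by simp
  then have "0 < s + k * t"
    using pos(1) by (simp add: zero_less_mult_iff)
  moreover have "s < k * (s div k) + k"
    using mult_div_mod_eq[of k s] pos_mod_bound[OF pos(3), of s] by linarith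
  ultimately have "0 < k * (s div k + t + 1)"
    by (simp add: algebra_simps)
  then have "0 \<le> s div k + t"
    using pos(3) by (simp add: zero_less_mult_iff)
  then have "0 \<le> a * (s div k + t)"
    using pos(1) by simp
  then have "0 \<le> (s div k) * a + a * t"
    by (simp add: distrib_left mult.commute)
  moreover have "ceil_div (x - s) k * a \<le> (ceil_div x k - s div k) * a"
    using ceil_div_diff_le[OF pos(3)] pos(1) by (simp add: mult_right_mono)
  moreover have "\<phi> (x - s, y + P) = \<phi> (x, y) + (ceil_div (x - s) k - ceil_div x k) * a - a * t"
    unfolding phi_eq using t by algebra
  ultimately show ?thesis
    by (simp add: left_diff_distrib)
qed

lemma phi_move_down: "\<phi> (x + s', y - P') \<le> \<phi> (x, y)"
proof -
  obtain t where t: "P' * c - s' * d = a * t"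
    using cong_sym[OF cong(2)] by (auto simp: cong_iff_dvd_diff elim!: dvdE)
  have "a * (s' - k * t) = (a + k * d) * s' - k * c * P'"
    using t by algebra
  then have "a * (s' - k * t) \<le> 0"
    using R_nonpos by simp
  then have "ceil_div s' k \<le> t"
    using pos(1,3) by (simp add: ceil_div_le_iff mult_le_0_iff)
  then have "ceil_div (x + s') k * a \<le> (ceil_div x k + t) * a"
    using ceil_div_add_le[OF pos(3), of x s'] pos(1) by (simp add: mult_right_mono)
  moreover have "\<phi> (x + s', y - P') = \<phi> (x, y) + (ceil_div (x + s') k - ceil_div x k) * a - a * t"
    unfolding phi_eq using t by algebra
  ultimately show ?thesis
    by (simp add: algebra_simps)
qed

lemma phi_move_diag: "\<phi> (x - (s - s'), y - (P' - P)) \<le> \<phi> (x, y)"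
proof -
  have "ceil_div (x - (s - s')) k * a \<le> ceil_div x k * a"
    using ceil_div_mono[OF pos(3)] order pos(1) by (simp add: mult_right_mono)
  moreover have "0 < (s - s') * d + (P' - P) * c"
    using order pos by (simp add: add_pos_pos)
  ultimately show ?thesis
    by (simp add: phi_eq algebra_simps)
qed

definition descent :: "((int \<times> int) \<times> (int \<times> int)) set" where
  "descent = measures [\<lambda>(x, y). nat ((a + k * d) * x + k * c * y), \<lambda>(x, y). nat y]"

lemma wf_descent: "wf descent"
  by (simp add: descent_def)

lemma descentI:
  assumes "0 \<le> x'" "0 \<le> y'"
    and "(a + k * d) * x' + k * c * y' < (a + k * d) * x + k * c * y \<or>
      (a + k * d) * x' + k * c * y' \<le> (a + k * d) * x + k * c * y \<and> y' < y"
  shows "((x', y'), (x, y)) \<in> descent"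
proof -
  have "0 \<le> (a + k * d) * x' + k * c * y'"
    using assms(1,2) pos by simp
  then show ?thesis
    using assms(2,3) by (auto simp: descent_def)
qed

text \<open>Outside \<open>L\<close> one of the moves \<open>phi_move_left\<close>, \<open>phi_move_diag\<close>, \<open>phi_move_down\<close> applies;
  by \<open>R\<^sub>v > 0\<close> and \<open>R\<^sub>v\<^sub>+\<^sub>1 \<le> 0\<close> the first two lower the weight \<open>(a + k d) x + k c y\<close> and the
  last one lowers \<open>y\<close> without raising the weight.\<close>
lemma reduce_to_staircase:
  "0 \<le> x \<Longrightarrow> 0 \<le> y \<Longrightarrow> \<exists>q\<in>L. \<phi> q \<le> \<phi> (x, y) \<and> [\<phi> q = \<phi> (x, y)] (mod a)"
proof (induction "(x, y)" arbitrary: x y rule: wf_induct[OF wf_descent])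
  case (1 x y)
  have step: "\<exists>q\<in>L. \<phi> q \<le> \<phi> (x, y) \<and> [\<phi> q = \<phi> (x, y)] (mod a)"
    if nonneg: "0 \<le> x'" "0 \<le> y'" and le: "\<phi> (x', y') \<le> \<phi> (x, y)"
      and cong': "[\<phi> (x', y') = \<phi> (x, y)] (mod a)" and desc: "((x', y'), (x, y)) \<in> descent" for x' y'
  proof -
    have "\<exists>q\<in>L. \<phi> q \<le> \<phi> (x', y') \<and> [\<phi> q = \<phi> (x', y')] (mod a)"
      by (rule "1.hyps"[rule_format, OF desc refl nonneg])
    then obtain q where q: "q \<in> L" "\<phi> q \<le> \<phi> (x', y')" "[\<phi> q = \<phi> (x', y')] (mod a)"
      by blast
    have "\<phi> q \<le> \<phi> (x, y)"
      using q(2) le by (rule order_trans)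
    moreover have "[\<phi> q = \<phi> (x, y)] (mod a)"
      using q(3) cong' by (rule cong_trans)
    ultimately show ?thesis
      using q(1) by blast
  qed
  consider "(x, y) \<in> L" | "s \<le> x" | "s - s' \<le> x" "x < s" "P' - P \<le> y" | "x < s - s'" "P' \<le> y"
    using "1.prems" by (fastforce simp: staircase_def)
  then show ?case
  proof cases
    case 1
    then show ?thesis
      by auto
  next
    case 2
    have "(a + k * d) * (x - s) + k * c * (y + P) < (a + k * d) * x + k * c * y"
      using R_pos by (simp add: algebra_simps)
    then show ?thesis
      using 2 "1.prems" order phi_move_left[OF 2] phi_cong_move[OF cong(1)]
      by (intro step[of "x - s" "y + P"] descentI) auto
  next
    case 3
    have "[(s - s') * d = (P - P') * c] (mod a)"
      using cong by (simp add: left_diff_distrib cong_diff)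
    from phi_cong_move[OF this, of x y]
    have "[\<phi> (x - (s - s'), y - (P' - P)) = \<phi> (x, y)] (mod a)"
      by (metis add_uminus_conv_diff minus_diff_eq)
    moreover have "0 < (a + k * d) * (s - s') + k * c * (P' - P)"
      using order pos by (intro add_pos_pos mult_pos_pos) auto
    then have "(a + k * d) * (x - (s - s')) + k * c * (y - (P' - P)) < (a + k * d) * x + k * c * y"
      by (simp add: algebra_simps)
    ultimately show ?thesis
      using 3 "1.prems" order phi_move_diag
      by (intro step[of "x - (s - s')" "y - (P' - P)"] descentI) auto
  next
    case 4
    have "[(- s') * d = (- P') * c] (mod a)"
      using cong(2) by (simp add: cong_minus_minus_iff)
    from phi_cong_move[OF this, of x y]
    have "[\<phi> (x + s', y - P') = \<phi> (x, y)] (mod a)"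
      by simp
    moreover have "(a + k * d) * (x + s') + k * c * (y - P') \<le> (a + k * d) * x + k * c * y"
      using R_nonpos by (simp add: algebra_simps)
    ultimately show ?thesis
      using 4 "1.prems" order phi_move_down
      by (intro step[of "x + s'" "y - P'"] descentI) auto
  qed
qed

lemma finite_staircase: "finite L"
  by (simp add: staircase_def)

lemma card_staircase: "card L = nat a"
proof -
  have "card L = card ({0..s - 1} \<times> {0..P' - P - 1}) + card ({0..s - s' - 1} \<times> {P' - P..P' - 1})"
    unfolding staircase_def by (rule card_Un_disjoint) auto
  also have "\<dots> = nat s * nat (P' - P) + nat (s - s') * nat P"
    by (simp add: card_cartesian_product)
  finally have "int (card L) = s * (P' - P) + (s - s') * P"
    using order by (simp add: of_nat_mult)
  also have "\<dots> = a"
    using det by (simp add: algebra_simps)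
  finally show ?thesis
    by simp
qed

lemma phi_mod_staircase: "(\<lambda>q. \<phi> q mod a) ` L = {0..<a}"
proof
  show "(\<lambda>q. \<phi> q mod a) ` L \<subseteq> {0..<a}"
    using pos by auto
next
  show "{0..<a} \<subseteq> (\<lambda>q. \<phi> q mod a) ` L"
  proof
    fix j
    assume j: "j \<in> {0..<a}"
    obtain x where x: "[d * x = j] (mod a)"
      using cong_solve_dvd_int[of d a j] coprime by (auto simp: gcd.commute)
    have "0 \<le> x mod a"
      using pos by simp
    then obtain q where q: "q \<in> L" "[\<phi> q = \<phi> (x mod a, 0)] (mod a)"
      using reduce_to_staircase by blast
    have "[\<phi> (x mod a, 0) = x mod a * d + 0 * c] (mod a)"
      by (rule phi_cong_linear)
    also have "[x mod a * d + 0 * c = d * x] (mod a)"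
      by (simp add: mult.commute cong_scalar_left)
    finally have "[\<phi> q = j] (mod a)"
      using q(2) x cong_trans by blast
    then have "\<phi> q mod a = j"
      using j by (simp add: cong_def)
    then show "j \<in> (\<lambda>q. \<phi> q mod a) ` L"
      using q(1) by blast
  qed
qed

lemma inj_on_phi_mod_staircase: "inj_on (\<lambda>q. \<phi> q mod a) L"
  using finite_staircase card_staircase pos(1)
  by (intro eq_card_imp_inj_on) (simp_all add: phi_mod_staircase)

lemma staircase_apery: "q \<in> L \<Longrightarrow> \<phi> q - a \<notin> AA_repr a d k c"
proof
  assume q: "q \<in> L" and "\<phi> q - a \<in> AA_repr a d k c"
  then obtain t x y where txy: "\<phi> q - a = t * a + x * d + y * c" "0 \<le> x" "x \<le> k * t" "0 \<le> y"
    by (auto simp: AA_repr_def)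
  then obtain p where p: "p \<in> L" "\<phi> p \<le> \<phi> (x, y)" "[\<phi> p = \<phi> (x, y)] (mod a)"
    using reduce_to_staircase by blast
  have "ceil_div x k \<le> t"
    using txy pos(3) by (simp add: ceil_div_le_iff)
  then have gap: "\<phi> q - a = \<phi> (x, y) + (t - ceil_div x k) * a" "0 \<le> (t - ceil_div x k) * a"
    using txy(1) pos(1) by (simp_all add: phi_eq algebra_simps)
  then have "\<phi> q = \<phi> (x, y) + (t - ceil_div x k + 1) * a"
    by (simp add: algebra_simps)
  then have "[\<phi> (x, y) = \<phi> q] (mod a)"
    by (simp add: cong_iff_dvd_diff)
  with p(3) have "[\<phi> p = \<phi> q] (mod a)"
    by (rule cong_trans)
  then have "p = q"
    using inj_on_phi_mod_staircase p(1) q by (auto simp: cong_def dest: inj_onD)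
  with p(2) have "\<phi> q \<le> \<phi> (x, y)"
    by simp
  with gap pos(1) show False
    by linarith
qed

end

lemma Rseq_pos_iff:
  "0 < a \<Longrightarrow> 0 < Rseq a d k c s0 i \<longleftrightarrow> 0 < (a + k * d) * sseq a s0 i - k * c * Pseq a s0 i"
  unfolding Rseq_def by (simp add: zero_less_divide_iff del: of_int_diff of_int_mult of_int_add)

lemma Rseq_nonpos_iff:
  "0 < a \<Longrightarrow> Rseq a d k c s0 i \<le> 0 \<longleftrightarrow> (a + k * d) * sseq a s0 i - k * c * Pseq a s0 i \<le> 0"
  unfolding Rseq_def by (simp add: divide_le_0_iff del: of_int_diff of_int_mult of_int_add)

lemma Lset_apery:
  assumes pos: "0 < a" "0 < d" "0 < k" "0 < c" and coprime: "gcd a d = 1"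
    and s0: "0 \<le> s0" "s0 < a" "[d * s0 = c] (mod a)"
    and v: "-1 \<le> v" "Rseq a d k c s0 (v + 1) \<le> 0" "0 < Rseq a d k c s0 v"
    and q: "q \<in> Lset a s0 v"
  shows "phi a d k c q - a \<notin> gen_sg (AA_gens a d k c)"
proof -
  let ?s = "sseq a s0 v" and ?s' = "sseq a s0 (v + 1)" and ?P = "Pseq a s0 v" and ?P' = "Pseq a s0 (v + 1)"
  have st: "cf_state a s0 (nat (v + 1)) = (?s, ?s', ?P, ?P')"
    using cf_state_sseq[OF v(1)] .
  have q': "q \<in> staircase ?s ?s' ?P ?P'"
    using q by (simp add: Lset_eq_staircase)
  have R: "0 < (a + k * d) * ?s - k * c * ?P" "(a + k * d) * ?s' - k * c * ?P' \<le> 0"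
    using v(2,3) pos(1) by (simp_all add: Rseq_pos_iff Rseq_nonpos_iff)
  have "0 < ?s \<or> ?s' < ?s"
    using q' by (auto simp: staircase_def)
  moreover have "\<not> (?s = 0 \<and> 0 < ?P)"
  proof
    assume degenerate: "?s = 0 \<and> 0 < ?P"
    then have "0 < k * c * ?P"
      using pos by simp
    with R(1) degenerate show False
      by simp
  qed
  ultimately have order: "0 \<le> ?s'" "?s' < ?s" "0 \<le> ?P" "?P < ?P'"
    using cf_state_shape[OF s0(1,2) st] by auto
  have "rodseth_staircase a d k c ?s ?s' ?P ?P'"
  proof
    show "0 \<le> ?s'" "?s' < ?s" "0 \<le> ?P" "?P < ?P'"
      by (fact order)+
    show "?s * ?P' - ?s' * ?P = a"
      by (rule cf_state_det[OF st])
    show "[?s * d = ?P * c] (mod a)" "[?s' * d = ?P' * c] (mod a)"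
      using cf_state_cong[OF s0(3) st] by auto
    show "0 < (a + k * d) * ?s - k * c * ?P" "(a + k * d) * ?s' - k * c * ?P' \<le> 0"
      by (fact R)+
  qed (use pos coprime in auto)
  then have "phi a d k c q - a \<notin> AA_repr a d k c"
    using q' by (rule rodseth_staircase.staircase_apery)
  then show ?thesis
    using gen_sg_AA_gens_subset[OF pos(3)] by blast
qed

locale half_frobenius_point =
  fixes S :: "int set" and L :: "(int \<times> int) set" and a d k c x1 y1 :: int
  assumes pos: "0 < a" "0 < d" "0 < k" "0 < c"
    and pseudo_symmetric: "pseudo_symmetric S"
    and add_closed: "\<And>n n'. n \<in> S \<Longrightarrow> n' \<in> S \<Longrightarrow> n + n' \<in> S"
    and apery: "\<And>q. q \<in> L \<Longrightarrow> phi a d k c q - a \<notin> S"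
    and half: "phi a d k c (x1, y1) = frob S div 2 + a"
begin

lemma no_step:
  assumes "q \<in> L" "g \<in> S" "g \<noteq> 0"
  shows "phi a d k c q \<noteq> phi a d k c (x1, y1) + g"
proof
  assume "phi a d k c q = phi a d k c (x1, y1) + g"
  then have "phi a d k c q - a = frob S div 2 + g"
    using half by simp
  moreover have "frob S div 2 + g \<in> S"
    using pseudo_symmetric_half_plus[OF pseudo_symmetric add_closed assms(2,3)] .
  ultimately show False
    using apery[OF assms(1)] by simp
qed

lemma no_step_y: "c \<in> S \<Longrightarrow> (x1, y1 + 1) \<notin> L"
  using no_step[of "(x1, y1 + 1)" c] pos by (auto simp: phi_add_y)

lemma no_step_k:
  assumes "a + k * d \<in> S"
  shows "(x1 + k, y1) \<notin> L"
proof -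
  have "0 < a + k * d"
    using pos by (simp add: add_pos_pos)
  then show ?thesis
    using no_step[of "(x1 + k, y1)" "a + k * d"] assms pos(3) by (auto simp: phi_add_k)
qed

lemma no_step_x:
  assumes "1 < k" "a + d \<in> S" and pred: "x1 \<noteq> 0 \<Longrightarrow> (x1 - 1, y1) \<in> L"
  shows "x1 = 0 \<or> (x1 + 1, y1) \<notin> L \<or> [x1 = 1] (mod k)"
proof (rule ccontr)
  assume "\<not> ?thesis"
  then have succ: "(x1 + 1, y1) \<in> L" and "x1 \<noteq> 0" and "\<not> [x1 = 1] (mod k)"
    by auto
  show False
  proof (cases "k dvd x1")
    case True
    then show False
      using no_step[OF succ \<open>a + d \<in> S\<close>] pos by (simp add: phi_succ_dvd)
  next
    case False
    have "x1 mod k \<noteq> 1"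
      using \<open>\<not> [x1 = 1] (mod k)\<close> assms(1) by (simp add: cong_def)
    then have "phi a d k c (x1 + 1, y1) - a = frob S div 2 + d" "phi a d k c (x1 - 1, y1) - a = frob S div 2 - d"
      using False half assms(1) pos(3) by (simp_all add: phi_succ phi_pred)
    then have "frob S div 2 + d \<notin> S" "frob S div 2 - d \<notin> S"
      using apery succ pred[OF \<open>x1 \<noteq> 0\<close>] by metis+
    then show False
      using pseudo_symmetric_half_plus_or_minus[OF pseudo_symmetric, of d] pos(2) by simp
  qed
qed

end

theorem lemma5:
  fixes a d k c s0 m v x1 y1 :: int
  assumes pos: "a > 0" "d > 0" "k > 0" "c > 0"
    and k2: "k \<ge> 2"
    and gcd_all: "Gcd (AA_gens a d k c) = 1"
    and gcd_ad: "gcd a d = 1"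
    and s0: "0 \<le> s0" "s0 < a" "[d * s0 = c] (mod a)"
    and m: "m \<ge> -1" "sseq a s0 m > 0" "sseq a s0 (m + 1) = 0"
    and v: "-1 \<le> v" "v \<le> m" "Rseq a d k c s0 (v + 1) \<le> 0" "0 < Rseq a d k c s0 v"
    and psym: "pseudo_symmetric (gen_sg (AA_gens a d k c))"
    and pt: "(x1, y1) \<in> Lset a s0 v"
    and phival: "phi a d k c (x1, y1) = frob (gen_sg (AA_gens a d k c)) div 2 + a"
  shows "(y1 = 0 \<or> (x1, y1 + 1) \<notin> Lset a s0 v)
       \<and> (x1 < k \<or> (x1 + k, y1) \<notin> Lset a s0 v)
       \<and> (x1 = 0 \<or> (x1 + 1, y1) \<notin> Lset a s0 v \<or> [x1 = 1] (mod k))"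
proof -
  let ?S = "gen_sg (AA_gens a d k c)"
  have gens: "c \<in> ?S" "a + d \<in> ?S" "a + k * d \<in> ?S"
    using gen_sg_generator[OF finite_AA_gens AA_gens_memberI(1)]
      gen_sg_generator[OF finite_AA_gens AA_gens_memberI(2)[of 1 k]]
      gen_sg_generator[OF finite_AA_gens AA_gens_memberI(2)[of k k]] k2 by simp_all
  interpret half_frobenius_point ?S "Lset a s0 v" a d k c x1 y1
    using pos psym gen_sg_add Lset_apery[OF pos gcd_ad s0 v(1,3,4)] phival by unfold_locales auto
  have "(x1 - 1, y1) \<in> Lset a s0 v" if "x1 \<noteq> 0"
    using staircase_pred pt that unfolding Lset_eq_staircase by blast
  then show ?thesis
    using no_step_y[OF gens(1)] no_step_k[OF gens(3)] no_step_x[OF _ gens(2)] k2 by simp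
qed

end
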